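(* Let $p(z,w)=(z-w)^2$. For every $n\ge 0$ and every $k=0,1,\dots,n$, \[ A^n_{n,k}=-\frac{(n+2)(n+3)}{12}\,(k+1)(k+2)(k-n-1). \]
   Context: For a homogeneous polynomial $p(z,w)$ and $n\ge 0$, let $A^n=(a_{i,j})_{i,j=0}^n$ be the $(n+1)\times(n+1)$ matrix with $a_{i,j}=\langle p w^{i-j},p z^{i-j}\rangle$ for $i\ge j$ and $a_{i,j}=\overline{\langle p w^{j-i},p z^{j-i}\rangle}$ for $i<j$, the inner product being that of the Hardy space $H^2(\mathbb D^2)$ (in which the monomials $z^aw^b$ are orthonormal). Let $A^n_{i,j}$ denote the $(i,j)$ cofactor of $A^n$, i.e. $(-1)^{i+j}$ times the determinant of the matrix obtained from $A^n$ by deleting row $i$ and column $j$ (rows and columns indexed $0,\dots,n$; for $n=0$, $A^0_{0,0}=1$). For $p=(z-w)^2$, $A^n$ is the symmetric pentadiagonal Toeplitz matrix with diagonal entries $6$, first off-diagonal entries $-4$, second off-diagonal entries $1$, and all other entries $0$. *)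

theory Defs
  imports "HOL-Analysis.Analysis" "Jordan_Normal_Form.Determinant"
begin

text \<open>A polynomial in two variables z, w is represented by its coefficient function:
  f (a,b) is the coefficient of z^a w^b.\<close>
type_synonym poly2 = "nat \<times> nat \<Rightarrow> complex"

text \<open>Inner product of the Hardy space H^2 of the bidisc: monomials are orthonormal.\<close>
definition hardy_inner :: "poly2 \<Rightarrow> poly2 \<Rightarrow> complex" where
  "hardy_inner f g = (\<Sum>\<^sub>\<infinity>x\<in>UNIV. f x * cnj (g x))"

definition mult_monom :: "nat \<Rightarrow> nat \<Rightarrow> poly2 \<Rightarrow> poly2" where
  "mult_monom a b f = (\<lambda>(c,d). if a \<le> c \<and> b \<le> d then f (c - a, d - b) else 0)"

definition p_sq :: poly2 where
  "p_sq = (\<lambda>(a,b). if (a,b) = (2,0) then 1 else if (a,b) = (1,1) then -2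
                    else if (a,b) = (0,2) then 1 else 0)"

definition Amat :: "poly2 \<Rightarrow> nat \<Rightarrow> complex mat" where
  "Amat p n = mat (n+1) (n+1) (\<lambda>(i,j).
     if j \<le> i then hardy_inner (mult_monom 0 (i-j) p) (mult_monom (i-j) 0 p)
     else cnj (hardy_inner (mult_monom 0 (j-i) p) (mult_monom (j-i) 0 p)))"

end

theory Submission
  imports Defs
begin

(* The entries 6, -4, 1 of A^n are the stencil of the fourth difference operator.  The cubic
   y(x) = -(n+2)(n+3)/12 (x+1)(x+2)(x-n-1) has vanishing fourth differences, and its roots
   -2, -1, n+1 make the truncation of the stencil at the border invisible except in the last
   row; hence A^n y = D_n e_n with D_n = (n+2)(n+3)^2(n+4)/12.  Applying the adjugate gives
   det A^n * y_k = D_n * A^n_{n,k}.  For k = n the cofactor is det A^(n-1), which by induction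
   is D_(n-1) = y_n; so det A^n = D_n, and then A^n_{n,k} = y_k. *)

lemma det_mult_solution_eq_cofactor:
  fixes A :: "'a::comm_ring_1 mat"
  assumes A: "A \<in> carrier_mat N N" and y: "y \<in> carrier_vec N"
    and Ay: "A *\<^sub>v y = c \<cdot>\<^sub>v unit_vec N n" and "n < N" "k < N"
  shows "det A * y $ k = c * cofactor A n k"
proof -
  have "det A \<cdot>\<^sub>v y = (adj_mat A * A) *\<^sub>v y"
    using y by (auto simp: adj_mat(3)[OF A])
  also have "\<dots> = adj_mat A *\<^sub>v (c \<cdot>\<^sub>v unit_vec N n)"
    using assoc_mult_mat_vec[OF adj_mat(1)[OF A] A y] by (simp only: Ay)
  finally have "det A * y $ k = (adj_mat A *\<^sub>v (c \<cdot>\<^sub>v unit_vec N n)) $ k"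
    using y \<open>k < N\<close> by (metis carrier_vecD index_smult_vec(1))
  also have "\<dots> = c * adj_mat A $$ (k, n)"
    using adj_mat(1)[OF A] \<open>n < N\<close> \<open>k < N\<close>
    by (simp add: scalar_prod_def unit_vec_def sum.delta' if_distrib cong: if_cong)
  also have "\<dots> = c * cofactor A n k"
    using A \<open>n < N\<close> \<open>k < N\<close> by (simp add: adj_mat_def)
  finally show ?thesis .
qed

definition fourth_diff :: "(int \<Rightarrow> 'a::ring_1) \<Rightarrow> int \<Rightarrow> 'a" where
  "fourth_diff g x = g (x - 2) - 4 * g (x - 1) + 6 * g x - 4 * g (x + 1) + g (x + 2)"

lemma fourth_diff_cubic:
  "fourth_diff (\<lambda>j. c * (of_int j - a) * (of_int j - b) * (of_int j - e)) x = (0::'a::comm_ring_1)"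
  unfolding fourth_diff_def by (simp add: algebra_simps)

definition fourth_diff_coeff :: "int \<Rightarrow> 'a::ring_1" where
  "fourth_diff_coeff d =
     (if d = 0 then 6 else if \<bar>d\<bar> = 1 then -4 else if \<bar>d\<bar> = 2 then 1 else 0)"

lemma sum_fourth_diff_coeff_window:
  "(\<Sum>j\<in>{x-2..x+2}. fourth_diff_coeff (x - j) * g j) = fourth_diff g x"
proof -
  have "{x-2..x+2} = {x-2, x-1, x, x+1, x+2}" by auto
  then show ?thesis by (simp add: fourth_diff_def fourth_diff_coeff_def)
qed

lemma hardy_inner_finite_support:
  assumes "finite S" and "\<And>x. x \<notin> S \<Longrightarrow> f x * cnj (g x) = 0"
  shows "hardy_inner f g = (\<Sum>x\<in>S. f x * cnj (g x))"
  unfolding hardy_inner_def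
  by (subst infsum_cong_neutral[where T = S and g = "\<lambda>x. f x * cnj (g x)"]) (use assms in auto)

lemma hardy_inner_p_sq_shift:
  "hardy_inner (mult_monom 0 d p_sq) (mult_monom d 0 p_sq) = fourth_diff_coeff (int d)"
proof -
  let ?f = "mult_monom 0 d p_sq" and ?g = "mult_monom d 0 p_sq"
  have "hardy_inner ?f ?g = (\<Sum>x\<in>{(2, d), (1, d + 1), (0, d + 2)}. ?f x * cnj (?g x))"
    by (rule hardy_inner_finite_support) (auto simp: mult_monom_def p_sq_def split: if_splits)
  also have "\<dots> = ?g (2, d) - 2 * ?g (1, d + 1) + ?g (0, d + 2)"
    by (simp add: mult_monom_def p_sq_def)
  also have "\<dots> = fourth_diff_coeff (int d)"
    by (simp add: mult_monom_def p_sq_def fourth_diff_coeff_def)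
  finally show ?thesis .
qed

lemma Amat_p_sq_index:
  assumes "i \<le> n" and "j \<le> n"
  shows "Amat p_sq n $$ (i, j) = fourth_diff_coeff (int i - int j)"
  using assms by (auto simp: Amat_def hardy_inner_p_sq_shift of_nat_diff fourth_diff_coeff_def)

lemma Amat_carrier: "Amat p n \<in> carrier_mat (n+1) (n+1)"
  by (simp add: Amat_def)

lemma cofactor_Amat_0: "cofactor (Amat p 0) 0 0 = 1"
  using mat_delete_carrier[OF Amat_carrier[of p 0]] by (simp add: cofactor_def)

lemma cofactor_Amat_last: "cofactor (Amat p (Suc n)) (Suc n) (Suc n) = det (Amat p n)"
proof -
  have "mat_delete (Amat p (Suc n)) (Suc n) (Suc n) = Amat p n"
    by (rule eq_matI) (auto simp: Amat_def mat_delete_def)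
  then show ?thesis
    by (simp add: cofactor_def)
qed

lemma Amat_p_sq_mult_vec_index:
  fixes g :: "int \<Rightarrow> complex"
  assumes i: "i \<le> n" and g: "g (-2) = 0" "g (-1) = 0" "g (int n + 1) = 0"
  shows "(Amat p_sq n *\<^sub>v vec (n+1) (\<lambda>k. g (int k))) $ i
           = fourth_diff g (int i) - (if i = n then g (int n + 2) else 0)"
proof -
  let ?t = "\<lambda>j. fourth_diff_coeff (int i - j) * g j"
  have "(Amat p_sq n *\<^sub>v vec (n+1) (\<lambda>k. g (int k))) $ i = (\<Sum>k<n+1. ?t (int k))"
    using i by (auto simp: Amat_def scalar_prod_def lessThan_atLeast0 Amat_p_sq_index[symmetric]
        simp del: sum.op_ivl_Suc intro!: sum.cong)
  also have "\<dots> = (\<Sum>j\<in>{0..int n}. ?t j)"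
  proof -
    have "int ` {..n} = {0..int n}"
      by (metis atLeast0AtMost image_int_atLeastAtMost of_nat_0)
    moreover have "(\<Sum>k<n+1. ?t (int k)) = (\<Sum>j\<in>int ` {..n}. ?t j)"
      by (simp add: sum.reindex lessThan_Suc_atMost)
    ultimately show ?thesis
      by simp
  qed
  also have "\<dots> = (\<Sum>j\<in>{-2..int n + 2}. ?t j) - (if i = n then g (int n + 2) else 0)"
  proof -
    have "{-2..int n + 2} = insert (-2) (insert (-1) (insert (int n + 1) (insert (int n + 2) {0..int n})))"
      by auto
    then show ?thesis
      using i g by (simp add: fourth_diff_coeff_def)
  qed
  also have "(\<Sum>j\<in>{-2..int n + 2}. ?t j) = (\<Sum>j\<in>{int i - 2..int i + 2}. ?t j)"
    using i by (intro sum.mono_neutral_right) (auto simp: fourth_diff_coeff_def)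
  finally show ?thesis
    by (simp add: sum_fourth_diff_coeff_window)
qed

definition cofactor_cubic :: "nat \<Rightarrow> int \<Rightarrow> complex" where
  "cofactor_cubic n j =
     - (of_nat ((n+2) * (n+3)) / 12) * (of_int j + 1) * (of_int j + 2) * (of_int j - of_nat n - 1)"

lemma cofactor_cubic_roots:
  "cofactor_cubic n (-2) = 0" "cofactor_cubic n (-1) = 0" "cofactor_cubic n (int n + 1) = 0"
  by (simp_all add: cofactor_cubic_def)

lemma cofactor_cubic_diag: "cofactor_cubic n (int n) = of_nat ((n+1) * (n+2)^2 * (n+3)) / 12"
  unfolding cofactor_cubic_def by (simp add: power2_eq_square) (simp add: algebra_simps)

lemma cofactor_cubic_beyond:
  "cofactor_cubic n (int n + 2) = - of_nat ((n+2) * (n+3)^2 * (n+4)) / 12"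
  unfolding cofactor_cubic_def by (simp add: power2_eq_square) (simp add: algebra_simps)

lemma fourth_diff_cofactor_cubic: "fourth_diff (cofactor_cubic n) x = 0"
proof -
  have "cofactor_cubic n = (\<lambda>j. - (of_nat ((n+2) * (n+3)) / 12)
      * (of_int j - (-1)) * (of_int j - (-2)) * (of_int j - (of_nat n + 1)))"
    by (simp add: cofactor_cubic_def fun_eq_iff diff_diff_eq)
  then show ?thesis
    by (simp only: fourth_diff_cubic)
qed

lemma Amat_p_sq_mult_cofactor_cubic:
  "Amat p_sq n *\<^sub>v vec (n+1) (\<lambda>k. cofactor_cubic n (int k))
     = (of_nat ((n+2) * (n+3)^2 * (n+4)) / 12) \<cdot>\<^sub>v unit_vec (n+1) n"
proof (rule eq_vecI)
  fix i
  assume "i < dim_vec ((of_nat ((n+2) * (n+3)^2 * (n+4)) / 12) \<cdot>\<^sub>v unit_vec (n+1) n :: complex vec)"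
  then have i: "i \<le> n" by simp
  have "(Amat p_sq n *\<^sub>v vec (n+1) (\<lambda>k. cofactor_cubic n (int k))) $ i
      = fourth_diff (cofactor_cubic n) (int i) - (if i = n then cofactor_cubic n (int n + 2) else 0)"
    using i by (rule Amat_p_sq_mult_vec_index) (rule cofactor_cubic_roots)+
  then show "(Amat p_sq n *\<^sub>v vec (n+1) (\<lambda>k. cofactor_cubic n (int k))) $ i
      = ((of_nat ((n+2) * (n+3)^2 * (n+4)) / 12) \<cdot>\<^sub>v unit_vec (n+1) n) $ i"
    using i by (simp add: fourth_diff_cofactor_cubic cofactor_cubic_beyond)
qed (simp add: Amat_def)

lemma det_Amat_p_sq_mult_cofactor_cubic:
  assumes "k \<le> n"
  shows "det (Amat p_sq n) * cofactor_cubic n (int k)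
           = of_nat ((n+2) * (n+3)^2 * (n+4)) / 12 * cofactor (Amat p_sq n) n k"
  using det_mult_solution_eq_cofactor[OF Amat_carrier vec_carrier Amat_p_sq_mult_cofactor_cubic]
    assms by simp

lemma det_Amat_p_sq: "det (Amat p_sq n) = of_nat ((n+2) * (n+3)^2 * (n+4)) / 12"
proof -
  have det_from_last_cofactor: "det (Amat p_sq n) = of_nat ((n+2) * (n+3)^2 * (n+4)) / 12"
    if "cofactor (Amat p_sq n) n n = cofactor_cubic n (int n)" for n
  proof -
    have "cofactor_cubic n (int n) \<noteq> 0"
      by (simp add: cofactor_cubic_diag del: of_nat_mult of_nat_add of_nat_power)
    then show ?thesis
      using det_Amat_p_sq_mult_cofactor_cubic[of n n] that by simp
  qed
  show ?thesis
  proof (induction n)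
    case 0
    show ?case
      by (rule det_from_last_cofactor) (simp add: cofactor_Amat_0 cofactor_cubic_def)
  next
    case (Suc n)
    have "cofactor (Amat p_sq (Suc n)) (Suc n) (Suc n) = cofactor_cubic (Suc n) (int (Suc n))"
      unfolding cofactor_Amat_last Suc.IH cofactor_cubic_diag by (simp add: algebra_simps)
    then show ?case
      by (rule det_from_last_cofactor)
  qed
qed

theorem lemma3p4:
  fixes n k :: nat
  assumes "k \<le> n"
  shows "cofactor (Amat p_sq n) n k =
    complex_of_real (- (real ((n+2)*(n+3)) / 12) * real (k+1) * real (k+2) * (real k - real n - 1))"
proof -
  have "cofactor (Amat p_sq n) n k = cofactor_cubic n (int k)"
    using det_Amat_p_sq_mult_cofactor_cubic[OF assms]
    by (simp add: det_Amat_p_sq del: of_nat_mult of_nat_add of_nat_power)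
  then show ?thesis
    by (simp add: cofactor_cubic_def algebra_simps)
qed

end
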